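(* Let $n$ be a positive integer, $f:\mathbb{Z}_n\to\mathbb C$, $T_f=\max_{A\in\mathcal A_n}|f(A)|$, $m\le n$ a positive integer and $M=\{0,1,\dots,m-1\}\subseteq\mathbb{Z}_n$. Then \[\sum_{a\in\mathbb{Z}_n}\sum_{b\in\mathbb{Z}_n}|f(a+bM)|^2\le n^2T_f^2+\sum_{1\le k<m:\ k\mid n}\frac{m^2\phi(k)}{k}G_f(n/k).\]
   Context: An arithmetic progression in $\mathbb{Z}_n$ is a set $\{a+kd: 0\le k<l\}$ with $a,d\in\mathbb{Z}_n$ and $l$ an integer with $0\le l\le n/\gcd(n,d)$ (with $\gcd(0,n)=n$); $\mathcal A_n$ is the family of all of them. For a set $A$, $f(A)=\sum_{x\in A}f(x)$; for $a,b\in\mathbb{Z}_n$, $f(a+bM)=\sum_{x\in M}f(a+bx)$ (multiset sum). For a positive divisor $r$ of $n$ and $a\in\mathbb{Z}_n$, $g_f(a,r)=\sum_{x\in\mathbb{Z}_n:\,x=a+jr\text{ for some }j\in\mathbb{Z}_n}f(x)$ and $G_f(r)=\sum_{a=0}^{r-1}|g_f(a,r)|^2$. $\phi$ is Euler's totient function. *)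

theory Defs
  imports "HOL-Analysis.Analysis" "HOL-Number_Theory.Number_Theory"
begin

text \<open>Z_n is modelled by the representatives {0..<n} with arithmetic mod n.
  A function f on Z_n is a function nat => complex, only its values on {0..<n} matter.\<close>

definition arith_progs :: "nat \<Rightarrow> nat set set" where
  "arith_progs n = {{(a + k * d) mod n | k. k < l} | a d l.
      a < n \<and> d < n \<and> l \<le> n div gcd n d}"

definition setsum_f :: "(nat \<Rightarrow> complex) \<Rightarrow> nat set \<Rightarrow> complex" where
  "setsum_f f A = (\<Sum>x\<in>A. f x)"

definition T_f :: "nat \<Rightarrow> (nat \<Rightarrow> complex) \<Rightarrow> real" where
  "T_f n f = Max ((\<lambda>A. norm (setsum_f f A)) ` arith_progs n)"

text \<open>f(a + bM) as a multiset sum over M = {0,...,m-1}.\<close>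
definition f_dil :: "nat \<Rightarrow> (nat \<Rightarrow> complex) \<Rightarrow> nat \<Rightarrow> nat \<Rightarrow> nat \<Rightarrow> complex" where
  "f_dil n f m a b = (\<Sum>x<m. f ((a + b * x) mod n))"

definition g_f :: "nat \<Rightarrow> (nat \<Rightarrow> complex) \<Rightarrow> nat \<Rightarrow> nat \<Rightarrow> complex" where
  "g_f n f a r = (\<Sum>x\<in>{x. x < n \<and> (\<exists>j<n. x = (a + j * r) mod n)}. f x)"

definition G_f :: "nat \<Rightarrow> (nat \<Rightarrow> complex) \<Rightarrow> nat \<Rightarrow> real" where
  "G_f n f r = (\<Sum>a<r. (norm (g_f n f a r))^2)"

end

theory Submission
  imports Defs
begin

(* Fix b and let k = n / gcd(n,b) be its additive order. The orbit a, a + b, ..., a + (k-1) b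
   runs exactly once through the residue class of a modulo gcd(n,b), so its f-sum is
   g(a) = g_f(a mod gcd(n,b), gcd(n,b)), and each of its initial segments is an arithmetic
   progression, whose f-sum is bounded by T_f. If k >= m, f(a+bM) is such a segment. Otherwise
   m = qk + s with s < k and f(a+bM) = q g(a) + P(a) with |P(a)| <= T_f. In the expansion of
   the sum over a of |q g(a) + P(a)|^2, the cross term is the correlation of g with translates
   of f, which equals s G_f(gcd(n,b)), while the sum of |g(a)|^2 is k G_f(gcd(n,b)); this gives
   at most (qk + s)^2/k G_f(gcd(n,b)) + n T_f^2. Finally, exactly phi(k) residues b have
   order k. *)

lemma sum_lessThan_periodic:
  fixes \<phi> :: "nat \<Rightarrow> 'a::comm_semiring_1"
  assumes "\<And>x. \<phi> (x + k) = \<phi> x"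
  shows "(\<Sum>x<q * k. \<phi> x) = of_nat q * (\<Sum>x<k. \<phi> x)"
proof -
  have shift: "\<phi> (x + j * k) = \<phi> x" for x j
  proof (induction j)
    case (Suc j)
    then show ?case using assms[of "x + j * k"] by (simp add: algebra_simps)
  qed simp
  have "(\<Sum>x<q * k. \<phi> x) = (\<Sum>j<q. \<Sum>x\<in>{j * k..<j * k + k}. \<phi> x)"
    by (rule sum.nat_group[symmetric])
  also have "\<dots> = (\<Sum>j<q. \<Sum>x<k. \<phi> (x + j * k))"
  proof (rule sum.cong[OF refl])
    fix j
    show "(\<Sum>x\<in>{j * k..<j * k + k}. \<phi> x) = (\<Sum>x<k. \<phi> (x + j * k))"
      using sum.shift_bounds_nat_ivl[of \<phi> 0 "j * k" k] by (simp add: atLeast0LessThan add.commute)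
  qed
  finally show ?thesis by (simp add: shift)
qed

lemma sum_lessThan_add_mod:
  fixes \<phi> :: "nat \<Rightarrow> 'a::comm_monoid_add"
  assumes "n > 0"
  shows "(\<Sum>a<n. \<phi> ((a + c) mod n)) = (\<Sum>a<n. \<phi> a)"
proof (rule sum.reindex_bij_betw)
  have inj: "inj_on (\<lambda>a. (a + c) mod n) {..<n}"
    by (rule inj_onI) (metis lessThan_iff mod_less cong_def cong_add_rcancel_nat)
  moreover have "(\<lambda>a. (a + c) mod n) ` {..<n} = {..<n}"
    using inj assms by (intro endo_inj_surj) auto
  ultimately show "bij_betw (\<lambda>a. (a + c) mod n) {..<n} {..<n}"
    by (simp add: bij_betw_def)
qed

lemma sum_gcd_div_eq_sum_totient:
  fixes \<psi> :: "nat \<Rightarrow> 'a::comm_semiring_1"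
  assumes "n > 0"
  shows "(\<Sum>b<n. \<psi> (n div gcd n b)) = (\<Sum>k | k dvd n. of_nat (totient k) * \<psi> k)"
proof -
  have "{..<n} = insert 0 {0<..<n}" "{0<..n} = insert n {0<..<n}"
    using assms by auto
  then have "(\<Sum>b<n. \<psi> (n div gcd n b)) = (\<Sum>b\<in>{0<..n}. \<psi> (n div gcd b n))"
    by (simp add: gcd.commute)
  also have "\<dots> = (\<Sum>k | k dvd n. \<Sum>b | b \<in> {0<..n} \<and> n div gcd b n = k. \<psi> (n div gcd b n))"
    using assms by (intro sum.group[symmetric]) (auto simp: div_dvd_iff_mult finite_divisors_nat)
  also have "\<dots> = (\<Sum>k | k dvd n. of_nat (totient k) * \<psi> k)"
  proof (intro sum.cong refl)
    fix k assume "k \<in> {k. k dvd n}"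
    then have k: "n div k dvd n" "n div (n div k) = k"
      using assms by auto
    have "{b. b \<in> {0<..n} \<and> n div gcd b n = k} = {b \<in> {0<..n}. gcd b n = n div k}"
      using assms k by (auto simp: div_div_eq_right)
    moreover have "card {b \<in> {0<..n}. gcd b n = n div k} = totient k"
      using card_gcd_eq_totient[OF assms, of "n div k"] k by simp
    ultimately show "(\<Sum>b | b \<in> {0<..n} \<and> n div gcd b n = k. \<psi> (n div gcd b n)) = of_nat (totient k) * \<psi> k"
      using k by simp
  qed
  finally show ?thesis .
qed

lemma orbit_mod_period:
  fixes n b :: nat
  shows "(a + b * (x + j * (n div gcd n b))) mod n = (a + b * x) mod n"
proof -
  have "b * (n div gcd n b) = n * (b div gcd n b)"
    by (simp add: div_mult_swap mult.commute)
  then have "a + b * (x + j * (n div gcd n b)) = a + b * x + j * (b div gcd n b) * n"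
    by (simp add: algebra_simps)
  then show ?thesis by (simp only: mod_mult_self1)
qed

lemma inj_on_orbit:
  fixes n b :: nat
  shows "inj_on (\<lambda>x. (a + b * x) mod n) {..<n div gcd n b}"
proof (rule linorder_inj_onI')
  fix x y assume xy: "x \<in> {..<n div gcd n b}" "y \<in> {..<n div gcd n b}" "x < y"
  define g where "g = gcd n b"
  have "g > 0" using xy by (cases "g = 0") (auto simp: g_def)
  show "(a + b * x) mod n \<noteq> (a + b * y) mod n"
  proof
    assume "(a + b * x) mod n = (a + b * y) mod n"
    then have "n dvd (a + b * y) - (a + b * x)"
      using mod_eq_dvd_iff_nat[of "a + b * x" "a + b * y" n] xy by simp
    then have "g * (n div g) dvd g * ((b div g) * (y - x))"
      by (simp add: g_def mult.assoc[symmetric] diff_mult_distrib2)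
    then have "n div g dvd (b div g) * (y - x)"
      using \<open>g > 0\<close> by simp
    moreover have "coprime (n div g) (b div g)"
      using \<open>g > 0\<close> by (simp add: g_def div_gcd_coprime)
    ultimately have "n div g dvd y - x"
      using coprime_dvd_mult_right_iff by blast
    moreover have "0 < y - x" "y - x < n div g" using xy by (auto simp: g_def)
    ultimately show False using nat_dvd_not_less by blast
  qed
qed

lemma residue_class_eq_image:
  fixes n d r :: nat
  assumes "d dvd n" "r < d"
  shows "{y. y < n \<and> y mod d = r} = (\<lambda>j. r + j * d) ` {..<n div d}"
proof (intro equalityI subsetI)
  fix y assume y: "y \<in> {y. y < n \<and> y mod d = r}"
  have "y = y mod d + y div d * d" by (rule mod_div_mult_eq[symmetric])
  with y have "y = r + y div d * d" by simp
  moreover have "y < n div d * d" using y assms(1) by simp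
  then have "y div d < n div d" by (rule less_mult_imp_div_less)
  ultimately show "y \<in> (\<lambda>j. r + j * d) ` {..<n div d}" by blast
next
  fix y assume "y \<in> (\<lambda>j. r + j * d) ` {..<n div d}"
  then obtain j where j: "j < n div d" "y = r + j * d" by auto
  then have "Suc j * d \<le> n div d * d" by (intro mult_le_mono1) simp
  then show "y \<in> {y. y < n \<and> y mod d = r}" using j assms by simp
qed

lemma g_f_eq_sum_residue_class:
  assumes "d dvd n" "r < d"
  shows "g_f n f r d = (\<Sum>y | y < n \<and> y mod d = r. f y)"
proof -
  have "{x. x < n \<and> (\<exists>j<n. x = (r + j * d) mod n)} = {y. y < n \<and> y mod d = r}"
  proof (intro equalityI subsetI)
    fix x assume "x \<in> {x. x < n \<and> (\<exists>j<n. x = (r + j * d) mod n)}"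
    then obtain j where "x < n" "x = (r + j * d) mod n" by auto
    then show "x \<in> {y. y < n \<and> y mod d = r}" using assms by (simp add: mod_mod_cancel)
  next
    fix y assume y: "y \<in> {y. y < n \<and> y mod d = r}"
    then obtain j where j: "j < n div d" "y = r + j * d"
      using residue_class_eq_image[OF assms] by blast
    then have "y = (r + j * d) mod n" using y by simp
    moreover have "j < n" using j(1) div_le_dividend order_less_le_trans by blast
    ultimately show "y \<in> {x. x < n \<and> (\<exists>j<n. x = (r + j * d) mod n)}"
      using y by blast
  qed
  then show ?thesis by (simp add: g_f_def)
qed

lemma orbit_eq_residue_class:
  fixes n b :: nat
  assumes "n > 0"
  shows "(\<lambda>x. (a + b * x) mod n) ` {..<n div gcd n b} = {y. y < n \<and> y mod gcd n b = a mod gcd n b}"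
    (is "?orbit = ?class")
proof (rule card_subset_eq)
  define g where "g = gcd n b"
  have "g > 0" "g dvd n" "g dvd b" using assms by (auto simp: g_def)
  show "finite ?class" by simp
  show "?orbit \<subseteq> ?class"
  proof
    fix y assume "y \<in> ?orbit"
    then obtain x where "y = (a + b * x) mod n" by blast
    moreover obtain e where "b = g * e" using \<open>g dvd b\<close> by blast
    ultimately have "y mod g = (a + g * (e * x)) mod g"
      using \<open>g dvd n\<close> by (simp add: mod_mod_cancel mult.assoc)
    then show "y \<in> ?class" using \<open>y = (a + b * x) mod n\<close> assms by (simp add: g_def)
  qed
  have "card ?class = card ((\<lambda>j. a mod g + j * g) ` {..<n div g})"
    using residue_class_eq_image[OF \<open>g dvd n\<close>, of "a mod g"] \<open>g > 0\<close> by (simp add: g_def)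
  also have "\<dots> = n div g"
    using \<open>g > 0\<close> by (subst card_image) (auto simp: inj_on_def)
  also have "\<dots> = card ?orbit"
    using inj_on_orbit[of a b n] by (simp add: card_image g_def)
  finally show "card ?orbit = card ?class" by (rule sym)
qed

lemma f_dil_period_eq_g_f:
  assumes "n > 0"
  shows "f_dil n f (n div gcd n b) a b = g_f n f (a mod gcd n b) (gcd n b)"
proof -
  have "f_dil n f (n div gcd n b) a b = sum f ((\<lambda>x. (a + b * x) mod n) ` {..<n div gcd n b})"
    unfolding f_dil_def by (simp add: sum.reindex[OF inj_on_orbit])
  also have "\<dots> = g_f n f (a mod gcd n b) (gcd n b)"
    using assms by (simp add: orbit_eq_residue_class g_f_eq_sum_residue_class)
  finally show ?thesis .
qed

lemma finite_arith_progs: "finite (arith_progs n)"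
proof -
  have "arith_progs n \<subseteq> Pow {..<n}"
    unfolding arith_progs_def by auto
  then show ?thesis by (rule finite_subset) simp
qed

lemma f_dil_norm_le_T_f:
  assumes "a < n" "b < n" "s \<le> n div gcd n b"
  shows "norm (f_dil n f s a b) \<le> T_f n f"
proof -
  define A where "A = (\<lambda>x. (a + b * x) mod n) ` {..<s}"
  have "inj_on (\<lambda>x. (a + b * x) mod n) {..<s}"
    by (rule inj_on_subset[OF inj_on_orbit]) (use assms(3) in auto)
  then have "f_dil n f s a b = setsum_f f A"
    unfolding f_dil_def setsum_f_def A_def by (simp add: sum.reindex)
  moreover have "A = {(a + k * b) mod n | k. k < s}"
    unfolding A_def by (auto simp: ac_simps)
  then have "A \<in> arith_progs n"
    unfolding arith_progs_def using assms by blast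
  moreover have "finite (arith_progs n)" by (rule finite_arith_progs)
  ultimately show ?thesis
    unfolding T_f_def by (metis (mono_tags, lifting) Max_ge finite_imageI image_eqI)
qed

lemma f_dil_add_mult_period:
  "f_dil n f (q * (n div gcd n b) + s) a b
     = of_nat q * f_dil n f (n div gcd n b) a b + f_dil n f s a b"
proof -
  define k where "k = n div gcd n b"
  define \<phi> where "\<phi> x = f ((a + b * x) mod n)" for x
  have period: "\<phi> (x + j * k) = \<phi> x" for x j
    unfolding \<phi>_def k_def by (simp only: orbit_mod_period)
  have "f_dil n f (q * k + s) a b = (\<Sum>x\<in>{0..<q * k}. \<phi> x) + (\<Sum>x\<in>{q * k..<q * k + s}. \<phi> x)"
    unfolding f_dil_def \<phi>_def by (simp add: lessThan_atLeast0 sum.atLeastLessThan_concat)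
  also have "(\<Sum>x\<in>{0..<q * k}. \<phi> x) = of_nat q * f_dil n f k a b"
    using sum_lessThan_periodic[of \<phi> k q] period[of _ 1]
    by (simp add: lessThan_atLeast0 f_dil_def \<phi>_def)
  also have "(\<Sum>x\<in>{q * k..<q * k + s}. \<phi> x) = (\<Sum>x<s. \<phi> (x + q * k))"
    using sum.shift_bounds_nat_ivl[of \<phi> 0 "q * k" s] by (simp add: atLeast0LessThan add.commute)
  also have "\<dots> = (\<Sum>x<s. \<phi> x)"
    by (simp only: period)
  also have "\<dots> = f_dil n f s a b"
    by (simp add: f_dil_def \<phi>_def)
  finally show ?thesis by (simp add: k_def)
qed

lemma sum_g_f_mult_cnj_shift:
  assumes "n > 0" "d dvd n" "d dvd c"
  shows "(\<Sum>a<n. g_f n f (a mod d) d * cnj (f ((a + c) mod n)))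
       = (\<Sum>a<n. g_f n f (a mod d) d * cnj (f a))"
proof -
  obtain e where "c = d * e" using assms(3) by blast
  then have "((a + c) mod n) mod d = a mod d" for a
    using assms(2) by (simp add: mod_mod_cancel)
  then show ?thesis
    using sum_lessThan_add_mod[OF assms(1), of "\<lambda>a. g_f n f (a mod d) d * cnj (f a)" c] by simp
qed

lemma sum_norm_g_f_square:
  assumes "d dvd n"
  shows "(\<Sum>a<n. (norm (g_f n f (a mod d) d))^2) = real (n div d) * G_f n f d"
proof -
  define \<phi> where "\<phi> a = (norm (g_f n f (a mod d) d))^2" for a
  have "n = (n div d) * d" using assms by simp
  then have "(\<Sum>a<n. \<phi> a) = (\<Sum>a<(n div d) * d. \<phi> a)" by simp
  also have "\<dots> = real (n div d) * (\<Sum>r<d. \<phi> r)"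
    by (rule sum_lessThan_periodic) (simp add: \<phi>_def)
  also have "(\<Sum>r<d. \<phi> r) = G_f n f d"
    unfolding G_f_def \<phi>_def by (intro sum.cong) auto
  finally show ?thesis by (simp add: \<phi>_def)
qed

lemma sum_g_f_mult_cnj_f_dil:
  assumes "n > 0" "d dvd n" "d dvd b"
  shows "(\<Sum>a<n. g_f n f (a mod d) d * cnj (f_dil n f s a b))
       = of_nat s * (\<Sum>a<n. g_f n f (a mod d) d * cnj (f a))"
proof -
  have "(\<Sum>a<n. g_f n f (a mod d) d * cnj (f_dil n f s a b))
      = (\<Sum>a<n. \<Sum>x<s. g_f n f (a mod d) d * cnj (f ((a + b * x) mod n)))"
    unfolding f_dil_def by (simp add: sum_distrib_left)
  also have "\<dots> = (\<Sum>x<s. \<Sum>a<n. g_f n f (a mod d) d * cnj (f ((a + b * x) mod n)))"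
    by (rule sum.swap)
  also have "\<dots> = (\<Sum>x<s. \<Sum>a<n. g_f n f (a mod d) d * cnj (f a))"
  proof (rule sum.cong[OF refl])
    fix x
    show "(\<Sum>a<n. g_f n f (a mod d) d * cnj (f ((a + b * x) mod n)))
        = (\<Sum>a<n. g_f n f (a mod d) d * cnj (f a))"
      using assms by (intro sum_g_f_mult_cnj_shift) auto
  qed
  finally show ?thesis by simp
qed

lemma sum_g_f_mult_cnj_f:
  assumes "n > 0" "d dvd n"
  shows "(\<Sum>a<n. g_f n f (a mod d) d * cnj (f a)) = of_real (G_f n f d)"
proof -
  define h where "h a = g_f n f (a mod d) d" for a
  define C where "C = (\<Sum>a<n. h a * cnj (f a))"
  have "n div d > 0"
    using assms by (auto simp: div_greater_zero_iff dvd_imp_le dvd_pos_nat)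
  \<comment> \<open>With step b = d the orbits are the residue classes themselves, so the previous
    lemma for a full orbit pairs g with itself.\<close>
  have "of_nat (n div d) * C = (\<Sum>a<n. h a * cnj (f_dil n f (n div d) a d))"
    using sum_g_f_mult_cnj_f_dil[OF assms dvd_refl] by (simp add: h_def C_def)
  also have "\<dots> = (\<Sum>a<n. h a * cnj (h a))"
    using f_dil_period_eq_g_f[OF assms(1), of f d] assms(2) by (simp add: h_def)
  also have "\<dots> = (\<Sum>a<n. of_real ((norm (h a))^2))"
    by (simp only: complex_norm_square)
  also have "\<dots> = of_real (real (n div d) * G_f n f d)"
    unfolding of_real_sum[symmetric] h_def sum_norm_g_f_square[OF assms(2)] ..
  finally have "of_nat (n div d) * C = of_nat (n div d) * of_real (G_f n f d)" by simp
  with \<open>n div d > 0\<close> show ?thesis by (simp add: C_def h_def)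
qed

lemma complex_norm_add_square:
  fixes z w :: complex
  shows "(norm (z + w))^2 = (norm z)^2 + 2 * Re (z * cnj w) + (norm w)^2"
  unfolding cmod_power2 by (simp add: power2_eq_square algebra_simps)

lemma sum_norm_square_mult_add_le:
  fixes h P :: "'i \<Rightarrow> complex" and k q s :: nat
  assumes h: "(\<Sum>a\<in>A. (norm (h a))^2) = real k * G"
    and hP: "(\<Sum>a\<in>A. h a * cnj (P a)) = of_real (real s * G)"
    and "G \<ge> 0" "k > 0" and P: "\<And>a. a \<in> A \<Longrightarrow> norm (P a) \<le> T"
  shows "(\<Sum>a\<in>A. (norm (of_nat q * h a + P a))^2)
       \<le> real (q * k + s)^2 / real k * G + real (card A) * T^2"
proof -
  have expand: "(norm (of_nat q * h a + P a))^2
      = real q^2 * (norm (h a))^2 + 2 * real q * Re (h a * cnj (P a)) + (norm (P a))^2" for a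
    by (simp add: complex_norm_add_square norm_mult power_mult_distrib mult.assoc)
  have "(\<Sum>a\<in>A. (norm (of_nat q * h a + P a))^2)
      = (\<Sum>a\<in>A. real q^2 * (norm (h a))^2 + 2 * real q * Re (h a * cnj (P a)) + (norm (P a))^2)"
    by (simp only: expand)
  also have "\<dots> = real q^2 * (\<Sum>a\<in>A. (norm (h a))^2) + 2 * real q * Re (\<Sum>a\<in>A. h a * cnj (P a))
        + (\<Sum>a\<in>A. (norm (P a))^2)"
    by (simp only: sum.distrib sum_distrib_left Re_sum)
  also have "\<dots> = (real q^2 * real k + 2 * real q * real s) * G + (\<Sum>a\<in>A. (norm (P a))^2)"
    by (simp add: h hP algebra_simps)
  also have "\<dots> \<le> real (q * k + s)^2 / real k * G + real (card A) * T^2"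
  proof (rule add_mono)
    have "real k * (real q^2 * real k + 2 * real q * real s) + real s^2 = real (q * k + s)^2"
      by (simp add: power2_eq_square algebra_simps)
    then have "real q^2 * real k + 2 * real q * real s \<le> real (q * k + s)^2 / real k"
      using \<open>k > 0\<close> by (simp add: le_divide_eq mult.commute) (smt (verit) zero_le_power2)
    then show "(real q^2 * real k + 2 * real q * real s) * G \<le> real (q * k + s)^2 / real k * G"
      using \<open>G \<ge> 0\<close> by (rule mult_right_mono)
    show "(\<Sum>a\<in>A. (norm (P a))^2) \<le> real (card A) * T^2"
      using P by (intro sum_bounded_above) (simp add: power_mono)
  qed
  finally show ?thesis .
qed

lemma sum_norm_f_dil_square_le:
  assumes "b < n" and k: "k = n div gcd n b"
  shows "(\<Sum>a<n. (norm (f_dil n f m a b))^2)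
       \<le> real n * (T_f n f)^2 + (if k < m then real m ^ 2 / real k * G_f n f (n div k) else 0)"
proof (cases "k < m")
  case False
  have "(\<Sum>a<n. (norm (f_dil n f m a b))^2) \<le> (\<Sum>a<n. (T_f n f)^2)"
  proof (rule sum_mono)
    fix a assume "a \<in> {..<n}"
    then have "norm (f_dil n f m a b) \<le> T_f n f"
      using False assms by (intro f_dil_norm_le_T_f) auto
    then show "(norm (f_dil n f m a b))^2 \<le> (T_f n f)^2"
      by (simp add: power_mono)
  qed
  with False show ?thesis by simp
next
  case True
  define d where "d = gcd n b"
  define h where "h a = g_f n f (a mod d) d" for a
  have "n > 0" "d dvd n" "d dvd b" "n div k = d"
    using assms by (auto simp: d_def div_div_eq_right)
  have "k > 0" using \<open>n > 0\<close> by (simp add: k d_def div_greater_zero_iff)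
  have dil: "f_dil n f m a b = of_nat (m div k) * h a + f_dil n f (m mod k) a b" for a
  proof -
    have "f_dil n f m a b = f_dil n f (m div k * k + m mod k) a b"
      by (simp only: div_mult_mod_eq)
    also have "\<dots> = of_nat (m div k) * f_dil n f k a b + f_dil n f (m mod k) a b"
      unfolding k by (rule f_dil_add_mult_period)
    also have "f_dil n f k a b = h a"
      unfolding k h_def d_def using \<open>n > 0\<close> by (rule f_dil_period_eq_g_f)
    finally show ?thesis .
  qed
  have "(\<Sum>a<n. (norm (f_dil n f m a b))^2)
      = (\<Sum>a<n. (norm (of_nat (m div k) * h a + f_dil n f (m mod k) a b))^2)"
    by (simp only: dil)
  also have "\<dots> \<le> real (m div k * k + m mod k)^2 / real k * G_f n f d + real (card {..<n}) * (T_f n f)^2"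
  proof (rule sum_norm_square_mult_add_le)
    show "(\<Sum>a<n. (norm (h a))^2) = real k * G_f n f d"
      unfolding h_def k d_def[symmetric] using \<open>d dvd n\<close> by (rule sum_norm_g_f_square)
    show "(\<Sum>a<n. h a * cnj (f_dil n f (m mod k) a b)) = of_real (real (m mod k) * G_f n f d)"
      unfolding h_def
      using sum_g_f_mult_cnj_f_dil[OF \<open>n > 0\<close> \<open>d dvd n\<close> \<open>d dvd b\<close>]
        sum_g_f_mult_cnj_f[OF \<open>n > 0\<close> \<open>d dvd n\<close>]
      by simp
    show "G_f n f d \<ge> 0" unfolding G_f_def by (simp add: sum_nonneg)
    show "norm (f_dil n f (m mod k) a b) \<le> T_f n f" if "a \<in> {..<n}" for a
      using that assms \<open>k > 0\<close> by (intro f_dil_norm_le_T_f) auto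
  qed fact
  also have "\<dots> = real n * (T_f n f)^2 + real m ^ 2 / real k * G_f n f (n div k)"
    by (simp only: div_mult_mod_eq card_lessThan \<open>n div k = d\<close>)
  finally show ?thesis using True by simp
qed

theorem lemma4p3:
  fixes n m :: nat and f :: "nat \<Rightarrow> complex"
  assumes "n > 0" and "m > 0" and "m \<le> n"
  shows "(\<Sum>a<n. \<Sum>b<n. (norm (f_dil n f m a b))^2)
         \<le> real n ^ 2 * (T_f n f)^2
           + (\<Sum>k\<in>{k. 1 \<le> k \<and> k < m \<and> k dvd n}.
                real m ^ 2 * real (totient k) / real k * G_f n f (n div k))"
proof -
  define \<psi> where "\<psi> k = (if k < m then real m ^ 2 / real k * G_f n f (n div k) else 0)" for k
  have "(\<Sum>a<n. \<Sum>b<n. (norm (f_dil n f m a b))^2) = (\<Sum>b<n. \<Sum>a<n. (norm (f_dil n f m a b))^2)"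
    by (rule sum.swap)
  also have "\<dots> \<le> (\<Sum>b<n. real n * (T_f n f)^2 + \<psi> (n div gcd n b))"
    unfolding \<psi>_def by (intro sum_mono sum_norm_f_dil_square_le) auto
  also have "\<dots> = real n ^ 2 * (T_f n f)^2 + (\<Sum>k | k dvd n. real (totient k) * \<psi> k)"
    using sum_gcd_div_eq_sum_totient[OF \<open>n > 0\<close>, of \<psi>] by (simp add: sum.distrib power2_eq_square)
  also have "(\<Sum>k | k dvd n. real (totient k) * \<psi> k)
      = (\<Sum>k | k dvd n. if k < m then real m ^ 2 * real (totient k) / real k * G_f n f (n div k) else 0)"
    by (intro sum.cong refl) (simp add: \<psi>_def)
  also have "\<dots> = (\<Sum>k\<in>{k \<in> {k. k dvd n}. k < m}.
      real m ^ 2 * real (totient k) / real k * G_f n f (n div k))"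
    by (rule sum.inter_filter[symmetric]) (simp add: finite_divisors_nat \<open>n > 0\<close>)
  also have "{k \<in> {k. k dvd n}. k < m} = {k. 1 \<le> k \<and> k < m \<and> k dvd n}"
    using \<open>n > 0\<close> by (auto intro: Suc_leI dvd_pos_nat)
  finally show ?thesis .
qed

end
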